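(* For graphs $G,G_1,G_2$ and inflows, the following hold: (1) If $(in,G)\in(in_1,G_1)\bullet(in_2,G_2)$, $in_1\sim_{G_1}in_1'$, $in_2\sim_{G_2}in_2'$ and $(in',G)\in(in_1',G_1)\bullet(in_2',G_2)$, then $in\sim_G in'$. (2) If $(in,G)\in(in_1,G_1)\bullet(in_2,G_2)$ and $in\sim_G in'$, then there exist $in_1',in_2'$ with $in_1\sim_{G_1}in_1'$, $in_2\sim_{G_2}in_2'$ and $(in',G)\in(in_1',G_1)\bullet(in_2',G_2)$.
   Context: Fix a flow domain $(D,\sqsubseteq,\sqcup,+,\cdot,0,1)$ (a positive partially ordered $\omega$-complete semiring: $(D,\sqsubseteq)$ an $\omega$-cpo with join $\sqcup$, $(D,+,\cdot,0,1)$ a semiring, $+,\cdot$ continuous, $0$ least element) and a node label join-semilattice $(A,\sqsubseteq,\sqcup,a_e)$. A graph $G=(N,N^o,\lambda,\varepsilon)$ has finite node set $N=\mathrm{dom}(G)$, finite sink set $N^o$ disjoint from $N$, $\lambda\colon N\to A$, $\varepsilon\colon N\times(N\cup N^o)\to D$. $G_1\uplus G_2$ is defined iff $N_1\cap N_2=\emptyset$, and equals $(N_1\cup N_2,(N_1^o\setminus N_2)\cup(N_2^o\setminus N_1),\lambda_1\uplus\lambda_2,\varepsilon')$ with $\varepsilon'(n_1,n_2)=\varepsilon_i(n_1,n_2)$ if $n_1\in N_i$ and $n_2\in N_i\cup N_i^o$, and $0$ otherwise. Capacity: least fixpoint $\mathrm{cap}(G)(n,n')=\delta(n,n')+\sum_{n''\in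 N}\varepsilon(n,n'')\cdot\mathrm{cap}(G)(n'',n')$; flow: $\mathrm{flow}(in,G)(n)=\sum_{n'\in N}in(n')\cdot\mathrm{cap}(G)(n',n)$ for an inflow $in\colon N\to D$. Projection (for $G=G_1\uplus G_2$): $\mathrm{proj}(in,G)(G_1)(n)=in(n)+\sum_{n'\in\mathrm{dom}(G)\setminus\mathrm{dom}(G_1)}\mathrm{flow}(in,G)(n')\cdot\varepsilon(n',n)$ for $n\in\mathrm{dom}(G_1)$. Composition of inflow/graph pairs: $(in,G)\in(in_1,G_1)\bullet(in_2,G_2)$ iff $G=G_1\uplus G_2$ and $\mathrm{proj}(in,G)(G_i)=in_i$ for $i=1,2$. Inflow equivalence: $in\sim_G in'$ iff $\mathrm{flow}(in,G)=\mathrm{flow}(in',G)$. *)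

theory Defs
  imports Main
begin

definition is_lub :: "'a::order set \<Rightarrow> 'a \<Rightarrow> bool" where
  "is_lub S x \<longleftrightarrow> (\<forall>y\<in>S. y \<le> x) \<and> (\<forall>z. (\<forall>y\<in>S. y \<le> z) \<longrightarrow> x \<le> z)"

definition omega_chain :: "(nat \<Rightarrow> 'a::order) \<Rightarrow> bool" where
  "omega_chain c \<longleftrightarrow> (\<forall>i. c i \<le> c (Suc i))"

definition flow_domain :: "'d::{semiring_1,order} itself \<Rightarrow> bool" where
  "flow_domain _ \<longleftrightarrow>
     (\<forall>x::'d. 0 \<le> x) \<and>
     (\<forall>c::nat \<Rightarrow> 'd. omega_chain c \<longrightarrow> (\<exists>s. is_lub (range c) s)) \<and>
     (\<forall>(c::nat \<Rightarrow> 'd) s a. omega_chain c \<longrightarrow> is_lub (range c) s \<longrightarrow>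
        is_lub (range (\<lambda>i. a + c i)) (a + s) \<and>
        is_lub (range (\<lambda>i. c i + a)) (s + a) \<and>
        is_lub (range (\<lambda>i. a * c i)) (a * s) \<and>
        is_lub (range (\<lambda>i. c i * a)) (s * a))"

record ('n, 'a, 'd) graph =
  nodes :: "'n set"
  sinks :: "'n set"
  lab :: "'n \<Rightarrow> 'a"
  edge :: "'n \<Rightarrow> 'n \<Rightarrow> 'd"

definition wf_graph :: "('n, 'a, 'd) graph \<Rightarrow> bool" where
  "wf_graph G \<longleftrightarrow> finite (nodes G) \<and> finite (sinks G) \<and> nodes G \<inter> sinks G = {}"

text \<open>G = G1 \<uplus> G2, with labels and edge functions compared on their domains
  (labels on N, edges on N \<times> (N \<union> N^o)).\<close>
definition is_graph_union ::
  "('n, 'a, 'd::zero) graph \<Rightarrow> ('n, 'a, 'd) graph \<Rightarrow> ('n, 'a, 'd) graph \<Rightarrow> bool" where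
  "is_graph_union G G1 G2 \<longleftrightarrow>
     nodes G1 \<inter> nodes G2 = {} \<and>
     nodes G = nodes G1 \<union> nodes G2 \<and>
     sinks G = (sinks G1 - nodes G2) \<union> (sinks G2 - nodes G1) \<and>
     (\<forall>n\<in>nodes G. lab G n = (if n \<in> nodes G1 then lab G1 n else lab G2 n)) \<and>
     (\<forall>n1\<in>nodes G. \<forall>n2\<in>nodes G \<union> sinks G.
        edge G n1 n2 =
          (if n1 \<in> nodes G1 \<and> n2 \<in> nodes G1 \<union> sinks G1 then edge G1 n1 n2
           else if n1 \<in> nodes G2 \<and> n2 \<in> nodes G2 \<union> sinks G2 then edge G2 n1 n2
           else 0))"

definition kdelta :: "'n \<Rightarrow> 'n \<Rightarrow> 'd::{zero,one}" where
  "kdelta n n' = (if n = n' then 1 else 0)"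

definition is_cap :: "('n, 'a, 'd::{semiring_1,order}) graph \<Rightarrow> ('n \<Rightarrow> 'n \<Rightarrow> 'd) \<Rightarrow> bool" where
  "is_cap G c \<longleftrightarrow>
     (\<forall>n\<in>nodes G. \<forall>n'\<in>nodes G \<union> sinks G.
        c n n' = kdelta n n' + (\<Sum>n''\<in>nodes G. edge G n n'' * c n'' n')) \<and>
     (\<forall>c'. (\<forall>n\<in>nodes G. \<forall>n'\<in>nodes G \<union> sinks G.
              c' n n' = kdelta n n' + (\<Sum>n''\<in>nodes G. edge G n n'' * c' n'' n'))
           \<longrightarrow> (\<forall>n\<in>nodes G. \<forall>n'\<in>nodes G \<union> sinks G. c n n' \<le> c' n n'))"

definition cap :: "('n, 'a, 'd::{semiring_1,order}) graph \<Rightarrow> 'n \<Rightarrow> 'n \<Rightarrow> 'd" where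
  "cap G = (SOME c. is_cap G c)"

definition flow :: "('n \<Rightarrow> 'd) \<Rightarrow> ('n, 'a, 'd::{semiring_1,order}) graph \<Rightarrow> 'n \<Rightarrow> 'd" where
  "flow fin G n = (\<Sum>n'\<in>nodes G. fin n' * cap G n' n)"

text \<open>proj(in,G)(G1), where G1 is given by its node set N1.\<close>
definition proj :: "('n \<Rightarrow> 'd) \<Rightarrow> ('n, 'a, 'd::{semiring_1,order}) graph \<Rightarrow> 'n set \<Rightarrow> 'n \<Rightarrow> 'd" where
  "proj fin G N1 n = fin n + (\<Sum>n'\<in>nodes G - N1. flow fin G n' * edge G n' n)"

text \<open>(in,G) \<in> (in1,G1) \<bullet> (in2,G2); finlows are compared on the node sets.\<close>
definition in_comp ::
  "('n \<Rightarrow> 'd) \<Rightarrow> ('n, 'a, 'd::{semiring_1,order}) graph \<Rightarrow>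
   ('n \<Rightarrow> 'd) \<Rightarrow> ('n, 'a, 'd) graph \<Rightarrow> ('n \<Rightarrow> 'd) \<Rightarrow> ('n, 'a, 'd) graph \<Rightarrow> bool" where
  "in_comp fin G fin1 G1 fin2 G2 \<longleftrightarrow>
     is_graph_union G G1 G2 \<and>
     (\<forall>n\<in>nodes G1. proj fin G (nodes G1) n = fin1 n) \<and>
     (\<forall>n\<in>nodes G2. proj fin G (nodes G2) n = fin2 n)"

definition inflow_equiv :: "('n \<Rightarrow> 'd) \<Rightarrow> ('n, 'a, 'd::{semiring_1,order}) graph \<Rightarrow> ('n \<Rightarrow> 'd) \<Rightarrow> bool" where
  "inflow_equiv fin G fin' \<longleftrightarrow> (\<forall>n\<in>nodes G. flow fin G n = flow fin' G n)"

end

theory Submission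
  imports Defs
begin

text \<open>The flow of a graph is the least solution of x = in + x \<cdot> \<epsilon>, reached by Kleene
  iteration since the flow domain is omega-continuous. Projecting the inflow of G onto a
  subgraph G1 adds exactly the flow that enters G1 from the rest of G, so the least solution
  for G1 under the projected inflow coincides with the flow of G on dom(G1). Hence the flow of
  G on each part is determined by the flow of that part under its projected inflow, which gives
  (1); for (2) the projections of in' are the required inflows.\<close>

definition chain_lub :: "(nat \<Rightarrow> 'd::order) \<Rightarrow> 'd" where
  "chain_lub c = (THE s. is_lub (range c) s)"

lemma is_lub_unique: "is_lub S (x::'d::order) \<Longrightarrow> is_lub S y \<Longrightarrow> x = y"
  unfolding is_lub_def by (meson order_antisym)

lemma chain_lub_eq: "is_lub (range c) s \<Longrightarrow> chain_lub c = s"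
  unfolding chain_lub_def by (rule the_equality) (auto intro: is_lub_unique)

lemma omega_chain_mono: "omega_chain c \<Longrightarrow> i \<le> j \<Longrightarrow> c i \<le> c j"
  unfolding omega_chain_def by (rule lift_Suc_mono_le) auto

lemma sum_kdelta_right: "finite N \<Longrightarrow> m \<in> N \<Longrightarrow> (\<Sum>a\<in>N. f a * kdelta a m) = (f m :: 'd::semiring_1)"
  by (simp add: kdelta_def if_distrib cong: if_cong)

lemma sum_kdelta_left: "finite N \<Longrightarrow> m \<in> N \<Longrightarrow> (\<Sum>a\<in>N. kdelta m a * f a) = (f m :: 'd::semiring_1)"
  by (simp add: kdelta_def if_distrib[of "\<lambda>x. x * _"] sum.delta cong: if_cong)

text \<open>Kleene approximants of the capacity: cap_iter E N k n m sums the weights of the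
  paths from n to m with fewer than k edges whose intermediate nodes lie in N.\<close>

primrec cap_iter :: "('n \<Rightarrow> 'n \<Rightarrow> 'd::semiring_1) \<Rightarrow> 'n set \<Rightarrow> nat \<Rightarrow> 'n \<Rightarrow> 'n \<Rightarrow> 'd" where
  "cap_iter E N 0 = (\<lambda>n m. 0)"
| "cap_iter E N (Suc k) = (\<lambda>n m. kdelta n m + (\<Sum>a\<in>N. E n a * cap_iter E N k a m))"

lemma cap_iter_Suc_right:
  fixes E :: "'n \<Rightarrow> 'n \<Rightarrow> 'd::semiring_1"
  assumes N: "finite N" and "n \<in> N" "m \<in> N"
  shows "cap_iter E N (Suc k) n m = kdelta n m + (\<Sum>b\<in>N. cap_iter E N k n b * E b m)"
  using assms(2,3)
proof (induction k arbitrary: n m)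
  case 0
  then show ?case by simp
next
  case (Suc k)
  have "cap_iter E N (Suc (Suc k)) n m
      = kdelta n m + (\<Sum>a\<in>N. E n a * (kdelta a m + (\<Sum>b\<in>N. cap_iter E N k a b * E b m)))"
    using Suc by simp
  also have "(\<Sum>a\<in>N. E n a * (kdelta a m + (\<Sum>b\<in>N. cap_iter E N k a b * E b m)))
      = (\<Sum>a\<in>N. E n a * kdelta a m) + (\<Sum>a\<in>N. \<Sum>b\<in>N. E n a * cap_iter E N k a b * E b m)"
    by (simp only: distrib_left sum.distrib sum_distrib_left mult.assoc)
  also have "(\<Sum>a\<in>N. E n a * kdelta a m) = E n m"
    using sum_kdelta_right[OF N Suc.prems(2)] .
  also have "(\<Sum>a\<in>N. \<Sum>b\<in>N. E n a * cap_iter E N k a b * E b m)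
      = (\<Sum>b\<in>N. \<Sum>a\<in>N. E n a * cap_iter E N k a b * E b m)"
    by (rule sum.swap)
  also have "E n m + (\<Sum>b\<in>N. \<Sum>a\<in>N. E n a * cap_iter E N k a b * E b m)
      = (\<Sum>b\<in>N. cap_iter E N (Suc k) n b * E b m)"
    using sum_kdelta_left[OF N Suc.prems(1), of "\<lambda>b. E b m"]
    by (simp add: distrib_right sum.distrib sum_distrib_right mult.assoc)
  finally show ?case .
qed

definition flow_iter :: "('n \<Rightarrow> 'd::{semiring_1,order}) \<Rightarrow> ('n, 'a, 'd) graph \<Rightarrow> nat \<Rightarrow> 'n \<Rightarrow> 'd" where
  "flow_iter fin G k n = (\<Sum>n'\<in>nodes G. fin n' * cap_iter (edge G) (nodes G) k n' n)"

lemma flow_iter_Suc: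
  fixes G :: "('n, 'a, 'd::{semiring_1,order}) graph"
  assumes N: "finite (nodes G)" and n: "n \<in> nodes G"
  shows "flow_iter fin G (Suc k) n = fin n + (\<Sum>b\<in>nodes G. flow_iter fin G k b * edge G b n)"
proof -
  let ?C = "cap_iter (edge G) (nodes G) k"
  have "flow_iter fin G (Suc k) n
      = (\<Sum>n'\<in>nodes G. fin n' * (kdelta n' n + (\<Sum>b\<in>nodes G. ?C n' b * edge G b n)))"
    unfolding flow_iter_def by (rule sum.cong[OF refl]) (simp only: cap_iter_Suc_right[OF N _ n])
  also have "\<dots> = (\<Sum>n'\<in>nodes G. fin n' * kdelta n' n)
                + (\<Sum>n'\<in>nodes G. \<Sum>b\<in>nodes G. fin n' * ?C n' b * edge G b n)"
    by (simp only: distrib_left sum.distrib sum_distrib_left mult.assoc)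
  also have "(\<Sum>n'\<in>nodes G. fin n' * kdelta n' n) = fin n"
    by (rule sum_kdelta_right[OF N n])
  also have "(\<Sum>n'\<in>nodes G. \<Sum>b\<in>nodes G. fin n' * ?C n' b * edge G b n)
      = (\<Sum>b\<in>nodes G. flow_iter fin G k b * edge G b n)"
    unfolding flow_iter_def by (subst sum.swap) (simp only: sum_distrib_right)
  finally show ?thesis .
qed

lemma flow_cong: "(\<And>n. n \<in> nodes G \<Longrightarrow> f n = g n) \<Longrightarrow> flow f G m = flow g G m"
  unfolding flow_def by simp

lemma is_cap_unique:
  assumes "is_cap G c" "is_cap G c'" "n \<in> nodes G" "m \<in> nodes G \<union> sinks G"
  shows "c n m = c' n m"
  using assms unfolding is_cap_def by (meson order_antisym)

lemma graph_union_edge_left: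
  "is_graph_union G G1 G2 \<Longrightarrow> a \<in> nodes G1 \<Longrightarrow> n \<in> nodes G1 \<Longrightarrow> edge G1 a n = edge G a n"
  unfolding is_graph_union_def by auto

lemma graph_union_edge_right:
  "is_graph_union G G1 G2 \<Longrightarrow> a \<in> nodes G2 \<Longrightarrow> n \<in> nodes G2 \<Longrightarrow> edge G2 a n = edge G a n"
  unfolding is_graph_union_def by auto

context
  assumes fd: "flow_domain TYPE('d::{semiring_1,order})"
begin

lemma fd_nonneg: "0 \<le> (x::'d)"
  using fd unfolding flow_domain_def by blast

lemma chain_lub_is_lub: "omega_chain (c::nat \<Rightarrow> 'd) \<Longrightarrow> is_lub (range c) (chain_lub c)"
  using fd unfolding flow_domain_def by (metis chain_lub_eq)

lemma chain_lub_upper: "omega_chain (c::nat \<Rightarrow> 'd) \<Longrightarrow> c i \<le> chain_lub c"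
  using chain_lub_is_lub unfolding is_lub_def by blast

lemma chain_lub_least: "omega_chain (c::nat \<Rightarrow> 'd) \<Longrightarrow> (\<And>i. c i \<le> z) \<Longrightarrow> chain_lub c \<le> z"
  using chain_lub_is_lub unfolding is_lub_def by blast

lemma fd_continuous:
  assumes "omega_chain (c::nat \<Rightarrow> 'd)" "is_lub (range c) s"
  shows "is_lub (range (\<lambda>i. a + c i)) (a + s)" "is_lub (range (\<lambda>i. a * c i)) (a * s)"
    "is_lub (range (\<lambda>i. c i * a)) (s * a)"
  using fd assms unfolding flow_domain_def by blast+

text \<open>Monotonicity is not an axiom of the flow domain: it follows from continuity applied
  to the two-element chain a, b, b, \<dots>.\<close>
lemma fd_mono:
  assumes "(a::'d) \<le> b"
  shows "c + a \<le> c + b" "c * a \<le> c * b" "a * c \<le> b * c"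
proof -
  define ch where "ch = (\<lambda>i::nat. if i = 0 then a else b)"
  have ch: "omega_chain ch" using assms unfolding omega_chain_def ch_def by auto
  have "range ch = {a, b}" unfolding ch_def by (auto simp: image_def)
  then have "is_lub (range ch) b" unfolding is_lub_def using assms by auto
  from fd_continuous[OF ch this] have "c + ch 0 \<le> c + b" "c * ch 0 \<le> c * b" "ch 0 * c \<le> b * c"
    unfolding is_lub_def by blast+
  then show "c + a \<le> c + b" "c * a \<le> c * b" "a * c \<le> b * c"
    by (simp_all add: ch_def)
qed

lemma fd_add_mono:
  assumes "(a::'d) \<le> b" "c \<le> d"
  shows "a + c \<le> b + d"
proof -
  have "a + c \<le> a + d" "d + a \<le> d + b" using assms by (simp_all only: fd_mono(1))
  then show ?thesis by (simp add: add.commute order_trans)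
qed

lemma fd_sum_mono: "(\<And>x. x \<in> A \<Longrightarrow> (f x::'d) \<le> g x) \<Longrightarrow> sum f A \<le> sum g A"
proof (induction A rule: infinite_finite_induct)
  case (insert x F)
  then show ?case using fd_add_mono by simp
qed simp_all

lemma omega_chain_sum:
  "(\<And>j. j \<in> A \<Longrightarrow> omega_chain (c j :: nat \<Rightarrow> 'd)) \<Longrightarrow> omega_chain (\<lambda>i. \<Sum>j\<in>A. c j i)"
  unfolding omega_chain_def by (simp add: fd_sum_mono)

lemma omega_chain_mult_left: "omega_chain (c::nat \<Rightarrow> 'd) \<Longrightarrow> omega_chain (\<lambda>i. a * c i)"
  unfolding omega_chain_def by (simp add: fd_mono)

lemma omega_chain_mult_right: "omega_chain (c::nat \<Rightarrow> 'd) \<Longrightarrow> omega_chain (\<lambda>i. c i * a)"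
  unfolding omega_chain_def by (simp add: fd_mono)

lemma chain_lub_add:
  assumes c: "omega_chain (c::nat \<Rightarrow> 'd)" and c': "omega_chain c'"
  shows "chain_lub (\<lambda>i. c i + c' i) = chain_lub c + chain_lub c'"
proof (rule chain_lub_eq, unfold is_lub_def, intro conjI allI impI ballI)
  fix y assume "y \<in> range (\<lambda>i. c i + c' i)"
  then show "y \<le> chain_lub c + chain_lub c'" using c c' chain_lub_upper fd_add_mono by auto
next
  fix z assume z: "\<forall>y\<in>range (\<lambda>i. c i + c' i). y \<le> z"
  have "c j + c' i \<le> z" for i j
    using fd_add_mono[OF omega_chain_mono[OF c, of j "max i j"] omega_chain_mono[OF c', of i "max i j"]]
      z order_trans by auto
  moreover have "is_lub (range (\<lambda>j. c' i + c j)) (c' i + chain_lub c)" for i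
    using fd_continuous(1)[OF c chain_lub_is_lub[OF c]] .
  ultimately have "chain_lub c + c' i \<le> z" for i
    unfolding is_lub_def by (simp add: add.commute)
  moreover have "is_lub (range (\<lambda>i. chain_lub c + c' i)) (chain_lub c + chain_lub c')"
    using fd_continuous(1)[OF c' chain_lub_is_lub[OF c']] .
  ultimately show "chain_lub c + chain_lub c' \<le> z" unfolding is_lub_def by blast
qed

lemma chain_lub_add_const:
  "omega_chain (c::nat \<Rightarrow> 'd) \<Longrightarrow> chain_lub (\<lambda>i. a + c i) = a + chain_lub c"
  using fd_continuous(1) chain_lub_is_lub chain_lub_eq by blast

lemma chain_lub_mult_left:
  "omega_chain (c::nat \<Rightarrow> 'd) \<Longrightarrow> chain_lub (\<lambda>i. a * c i) = a * chain_lub c"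
  using fd_continuous(2) chain_lub_is_lub chain_lub_eq by blast

lemma chain_lub_mult_right:
  "omega_chain (c::nat \<Rightarrow> 'd) \<Longrightarrow> chain_lub (\<lambda>i. c i * a) = chain_lub c * a"
  using fd_continuous(3) chain_lub_is_lub chain_lub_eq by blast

lemma chain_lub_sum:
  assumes "finite A" "\<And>j. j \<in> A \<Longrightarrow> omega_chain (c j :: nat \<Rightarrow> 'd)"
  shows "chain_lub (\<lambda>i. \<Sum>j\<in>A. c j i) = (\<Sum>j\<in>A. chain_lub (c j))"
  using assms
proof (induction A rule: finite_induct)
  case empty
  show ?case by (rule chain_lub_eq) (simp add: is_lub_def)
next
  case (insert x F)
  then show ?case by (simp add: chain_lub_add omega_chain_sum)
qed

lemma chain_lub_Suc: "omega_chain (c::nat \<Rightarrow> 'd) \<Longrightarrow> chain_lub (\<lambda>k. c (Suc k)) = chain_lub c"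
proof (rule chain_lub_eq, unfold is_lub_def, intro conjI allI impI ballI)
  fix y assume "omega_chain c" "y \<in> range (\<lambda>k. c (Suc k))"
  then show "y \<le> chain_lub c" using chain_lub_upper by auto
next
  fix z assume c: "omega_chain c" and z: "\<forall>y\<in>range (\<lambda>k. c (Suc k)). y \<le> z"
  have "c k \<le> z" for k
    using c z order_trans[of "c k" "c (Suc k)" z] unfolding omega_chain_def by auto
  then show "chain_lub c \<le> z" by (rule chain_lub_least[OF c])
qed

lemma omega_chain_cap_iter: "omega_chain (\<lambda>k. cap_iter (E::'n \<Rightarrow> 'n \<Rightarrow> 'd) N k n m)"
proof -
  have "cap_iter E N k n m \<le> cap_iter E N (Suc k) n m" for k n m
    by (induction k arbitrary: n m) (simp_all add: fd_nonneg fd_mono(1,2) fd_sum_mono)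
  then show ?thesis unfolding omega_chain_def by blast
qed

lemma is_cap_chain_lub_cap_iter:
  fixes G :: "('n, 'a, 'd) graph"
  assumes N: "finite (nodes G)"
  shows "is_cap G (\<lambda>n m. chain_lub (\<lambda>k. cap_iter (edge G) (nodes G) k n m))"
  unfolding is_cap_def
proof (intro conjI allI impI ballI)
  let ?C = "cap_iter (edge G) (nodes G)"
  fix n m
  have "chain_lub (\<lambda>k. ?C k n m) = chain_lub (\<lambda>k. ?C (Suc k) n m)"
    using chain_lub_Suc[OF omega_chain_cap_iter[of "edge G" "nodes G" n m]] by simp
  also have "\<dots> = kdelta n m + (\<Sum>a\<in>nodes G. edge G n a * chain_lub (\<lambda>k. ?C k a m))"
    by (simp add: chain_lub_add_const chain_lub_sum chain_lub_mult_left N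
        omega_chain_sum omega_chain_mult_left omega_chain_cap_iter)
  finally show "chain_lub (\<lambda>k. ?C k n m)
      = kdelta n m + (\<Sum>a\<in>nodes G. edge G n a * chain_lub (\<lambda>k. ?C k a m))" .
next
  let ?C = "cap_iter (edge G) (nodes G)"
  fix c n m
  assume c: "\<forall>n\<in>nodes G. \<forall>n'\<in>nodes G \<union> sinks G.
          c n n' = kdelta n n' + (\<Sum>n''\<in>nodes G. edge G n n'' * c n'' n')"
    and n: "n \<in> nodes G" and m: "m \<in> nodes G \<union> sinks G"
  have "\<forall>n\<in>nodes G. ?C k n m \<le> c n m" for k
  proof (induction k)
    case 0
    then show ?case by (simp add: fd_nonneg)
  next
    case (Suc k)
    show ?case
    proof
      fix n assume "n \<in> nodes G"
      have "?C (Suc k) n m \<le> kdelta n m + (\<Sum>n''\<in>nodes G. edge G n n'' * c n'' m)"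
        using Suc by (simp add: fd_mono(1,2) fd_sum_mono)
      then show "?C (Suc k) n m \<le> c n m" using c \<open>n \<in> nodes G\<close> m by simp
    qed
  qed
  then show "chain_lub (\<lambda>k. ?C k n m) \<le> c n m"
    using n by (intro chain_lub_least[OF omega_chain_cap_iter]) blast
qed

lemma cap_eq_chain_lub:
  fixes G :: "('n, 'a, 'd) graph"
  assumes "finite (nodes G)" "n \<in> nodes G" "m \<in> nodes G \<union> sinks G"
  shows "cap G n m = chain_lub (\<lambda>k. cap_iter (edge G) (nodes G) k n m)"
proof -
  have "is_cap G (cap G)"
    unfolding cap_def by (rule someI[of "is_cap G"], rule is_cap_chain_lub_cap_iter[OF assms(1)])
  then show ?thesis
    using is_cap_unique[OF _ is_cap_chain_lub_cap_iter[OF assms(1)] assms(2,3)] by simp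
qed

lemma omega_chain_flow_iter: "omega_chain (\<lambda>k. flow_iter fin (G::('n, 'a, 'd) graph) k n)"
  unfolding flow_iter_def by (intro omega_chain_sum omega_chain_mult_left omega_chain_cap_iter)

lemma flow_eq_chain_lub:
  fixes G :: "('n, 'a, 'd) graph"
  assumes N: "finite (nodes G)" and n: "n \<in> nodes G"
  shows "flow fin G n = chain_lub (\<lambda>k. flow_iter fin G k n)"
proof -
  have "flow fin G n = (\<Sum>n'\<in>nodes G. fin n' * chain_lub (\<lambda>k. cap_iter (edge G) (nodes G) k n' n))"
    unfolding flow_def using n cap_eq_chain_lub[OF N] by (intro sum.cong) auto
  then show ?thesis
    unfolding flow_iter_def
    by (simp add: chain_lub_sum chain_lub_mult_left N omega_chain_mult_left omega_chain_cap_iter)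
qed

lemma flow_fixpoint:
  fixes G :: "('n, 'a, 'd) graph"
  assumes N: "finite (nodes G)" and n: "n \<in> nodes G"
  shows "flow fin G n = fin n + (\<Sum>b\<in>nodes G. flow fin G b * edge G b n)"
proof -
  have "flow fin G n = chain_lub (\<lambda>k. flow_iter fin G (Suc k) n)"
    using flow_eq_chain_lub[OF N n] chain_lub_Suc[OF omega_chain_flow_iter[of fin G n]] by simp
  also have "\<dots> = chain_lub (\<lambda>k. fin n + (\<Sum>b\<in>nodes G. flow_iter fin G k b * edge G b n))"
    by (simp only: flow_iter_Suc[OF N n])
  also have "\<dots> = fin n + (\<Sum>b\<in>nodes G. chain_lub (\<lambda>k. flow_iter fin G k b) * edge G b n)"
    by (simp add: chain_lub_add_const chain_lub_sum chain_lub_mult_right N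
        omega_chain_sum omega_chain_mult_right omega_chain_flow_iter)
  also have "\<dots> = fin n + (\<Sum>b\<in>nodes G. flow fin G b * edge G b n)"
    using flow_eq_chain_lub[OF N] by simp
  finally show ?thesis .
qed

lemma flow_least:
  fixes G :: "('n, 'a, 'd) graph"
  assumes N: "finite (nodes G)"
    and y: "\<And>n. n \<in> nodes G \<Longrightarrow> fin n + (\<Sum>b\<in>nodes G. y b * edge G b n) \<le> y n"
    and n: "n \<in> nodes G"
  shows "flow fin G n \<le> y n"
proof -
  have "\<forall>n\<in>nodes G. flow_iter fin G k n \<le> y n" for k
  proof (induction k)
    case 0
    then show ?case by (simp add: flow_iter_def fd_nonneg)
  next
    case (Suc k)
    show ?case
    proof
      fix n assume n: "n \<in> nodes G"
      have "flow_iter fin G (Suc k) n \<le> fin n + (\<Sum>b\<in>nodes G. y b * edge G b n)"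
        unfolding flow_iter_Suc[OF N n] using Suc by (simp add: fd_mono(1,3) fd_sum_mono)
      then show "flow_iter fin G (Suc k) n \<le> y n" using y n order_trans by blast
    qed
  qed
  then show ?thesis
    unfolding flow_eq_chain_lub[OF N n] using n by (intro chain_lub_least[OF omega_chain_flow_iter]) blast
qed

text \<open>The flow of G, restricted to dom(H), solves the fixpoint equation of H under the
  projected inflow; conversely, patching the flow of H into the flow of G gives a
  prefixpoint for G. Leastness in both directions gives equality.\<close>
lemma flow_proj_subgraph:
  fixes G H :: "('n, 'a, 'd) graph"
  assumes N: "finite (nodes G)" and sub: "nodes H \<subseteq> nodes G"
    and edge: "\<And>a n. a \<in> nodes H \<Longrightarrow> n \<in> nodes H \<Longrightarrow> edge H a n = edge G a n"
    and n: "n \<in> nodes H"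
  shows "flow (proj fin G (nodes H)) H n = flow fin G n"
proof -
  define x where "x = flow fin G"
  define b where "b = proj fin G (nodes H)"
  define xH where "xH = flow b H"
  have NH: "finite (nodes H)" using N sub by (rule finite_subset[rotated])
  have split: "(\<Sum>a\<in>nodes G. h a) = (\<Sum>a\<in>nodes G - nodes H. h a) + (\<Sum>a\<in>nodes H. h a)"
    for h :: "'n \<Rightarrow> 'd"
    using sum.subset_diff[OF sub N] .
  have x_H: "b n + (\<Sum>a\<in>nodes H. x a * edge H a n) = x n" if "n \<in> nodes H" for n
  proof -
    have "b n + (\<Sum>a\<in>nodes H. x a * edge H a n) = fin n + (\<Sum>a\<in>nodes G. x a * edge G a n)"
      unfolding split b_def proj_def x_def using edge that by (simp add: ac_simps)
    also have "\<dots> = x n" unfolding x_def using flow_fixpoint[OF N] that sub by auto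
    finally show ?thesis .
  qed
  then have xH_le: "xH n \<le> x n" if "n \<in> nodes H" for n
    unfolding xH_def using flow_least[OF NH] that by (metis order_refl)
  define y where "y n = (if n \<in> nodes H then xH n else x n)" for n
  have "x n \<le> y n"
    unfolding x_def
  proof (rule flow_least[OF N])
    fix n assume nG: "n \<in> nodes G"
    show "fin n + (\<Sum>a\<in>nodes G. y a * edge G a n) \<le> y n"
    proof (cases "n \<in> nodes H")
      case True
      have "fin n + (\<Sum>a\<in>nodes G. y a * edge G a n) = b n + (\<Sum>a\<in>nodes H. xH a * edge H a n)"
        unfolding split b_def proj_def x_def y_def using True edge by (simp add: ac_simps)
      also have "\<dots> = xH n" unfolding xH_def using flow_fixpoint[OF NH True] by simp
      finally show ?thesis using True y_def by simp
    next
      case False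
      have "y a \<le> x a" for a using xH_le y_def by simp
      then have "fin n + (\<Sum>a\<in>nodes G. y a * edge G a n) \<le> fin n + (\<Sum>a\<in>nodes G. x a * edge G a n)"
        by (simp add: fd_mono(1,3) fd_sum_mono)
      also have "\<dots> = x n" unfolding x_def using flow_fixpoint[OF N nG] by simp
      finally show ?thesis using False y_def by simp
    qed
  qed (use n sub in auto)
  with xH_le[OF n] n show ?thesis unfolding x_def xH_def b_def y_def by simp
qed

lemma in_comp_flow:
  fixes G :: "('n, 'a, 'd) graph"
  assumes N: "finite (nodes G)" and c: "in_comp fin G fin1 G1 fin2 G2"
  shows "n \<in> nodes G1 \<Longrightarrow> flow fin1 G1 n = flow fin G n"
    and "n \<in> nodes G2 \<Longrightarrow> flow fin2 G2 n = flow fin G n"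
proof -
  have u: "is_graph_union G G1 G2" using c unfolding in_comp_def by blast
  then have sub: "nodes G1 \<subseteq> nodes G" "nodes G2 \<subseteq> nodes G" unfolding is_graph_union_def by auto
  have "flow fin1 G1 n = flow (proj fin G (nodes G1)) G1 n"
    using c unfolding in_comp_def by (metis flow_cong)
  also have "\<dots> = flow fin G n" if "n \<in> nodes G1"
    using flow_proj_subgraph[OF N sub(1)] graph_union_edge_left[OF u] that by blast
  finally show "n \<in> nodes G1 \<Longrightarrow> flow fin1 G1 n = flow fin G n" .
  have "flow fin2 G2 n = flow (proj fin G (nodes G2)) G2 n"
    using c unfolding in_comp_def by (metis flow_cong)
  also have "\<dots> = flow fin G n" if "n \<in> nodes G2"
    using flow_proj_subgraph[OF N sub(2)] graph_union_edge_right[OF u] that by blast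
  finally show "n \<in> nodes G2 \<Longrightarrow> flow fin2 G2 n = flow fin G n" .
qed

lemma in_comp_inflow_equiv:
  fixes G :: "('n, 'a, 'd) graph"
  assumes N: "finite (nodes G)"
    and c: "in_comp fin G fin1 G1 fin2 G2" and c': "in_comp fin' G fin1' G1 fin2' G2"
    and e1: "inflow_equiv fin1 G1 fin1'" and e2: "inflow_equiv fin2 G2 fin2'"
  shows "inflow_equiv fin G fin'"
proof -
  have "nodes G = nodes G1 \<union> nodes G2" using c unfolding in_comp_def is_graph_union_def by blast
  moreover have "flow fin G n = flow fin' G n" if "n \<in> nodes G1" for n
    using in_comp_flow(1)[OF N c that] in_comp_flow(1)[OF N c' that] e1 that
    unfolding inflow_equiv_def by simp
  moreover have "flow fin G n = flow fin' G n" if "n \<in> nodes G2" for n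
    using in_comp_flow(2)[OF N c that] in_comp_flow(2)[OF N c' that] e2 that
    unfolding inflow_equiv_def by simp
  ultimately show ?thesis unfolding inflow_equiv_def by blast
qed

lemma in_comp_proj_inflow_equiv:
  fixes G :: "('n, 'a, 'd) graph"
  assumes N: "finite (nodes G)"
    and c: "in_comp fin G fin1 G1 fin2 G2" and e: "inflow_equiv fin G fin'"
  defines "fin1' \<equiv> proj fin' G (nodes G1)" and "fin2' \<equiv> proj fin' G (nodes G2)"
  shows "inflow_equiv fin1 G1 fin1' \<and> inflow_equiv fin2 G2 fin2' \<and> in_comp fin' G fin1' G1 fin2' G2"
proof (intro conjI)
  show c': "in_comp fin' G fin1' G1 fin2' G2"
    using c unfolding in_comp_def fin1'_def fin2'_def by simp
  have nodes: "nodes G1 \<subseteq> nodes G" "nodes G2 \<subseteq> nodes G"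
    using c unfolding in_comp_def is_graph_union_def by auto
  have e': "flow fin G n = flow fin' G n" if "n \<in> nodes G" for n
    using e that unfolding inflow_equiv_def by blast
  show "inflow_equiv fin1 G1 fin1'"
    using in_comp_flow(1)[OF N c] in_comp_flow(1)[OF N c'] e' nodes unfolding inflow_equiv_def by auto
  show "inflow_equiv fin2 G2 fin2'"
    using in_comp_flow(2)[OF N c] in_comp_flow(2)[OF N c'] e' nodes unfolding inflow_equiv_def by auto
qed

end

theorem mainTheorem4:
  fixes G G1 G2 :: "('n, 'a::semilattice_sup, 'd::{semiring_1,order}) graph"
  assumes fd: "flow_domain TYPE('d)"
    and wf: "wf_graph G" "wf_graph G1" "wf_graph G2"
  shows
    "(\<forall>fin fin1 fin2 fin' fin1' fin2'.
        in_comp fin G fin1 G1 fin2 G2 \<longrightarrow>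
        inflow_equiv fin1 G1 fin1' \<longrightarrow> inflow_equiv fin2 G2 fin2' \<longrightarrow>
        in_comp fin' G fin1' G1 fin2' G2 \<longrightarrow>
        inflow_equiv fin G fin')
     \<and>
     (\<forall>fin fin1 fin2 fin'.
        in_comp fin G fin1 G1 fin2 G2 \<longrightarrow> inflow_equiv fin G fin' \<longrightarrow>
        (\<exists>fin1' fin2'. inflow_equiv fin1 G1 fin1' \<and> inflow_equiv fin2 G2 fin2' \<and>
           in_comp fin' G fin1' G1 fin2' G2))"
proof -
  have N: "finite (nodes G)" using wf(1) unfolding wf_graph_def by blast
  show ?thesis
    using in_comp_inflow_equiv[OF fd N] in_comp_proj_inflow_equiv[OF fd N] by blast
qed

end
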